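(* Let $d\ge1$ and $\lambda=(\lambda_1,\dots,\lambda_d)$ a vector of positive integers with $\sum_t\lambda_t=n\ge2$. For distinct $i,j\in\{0,1,\dots,n-2\}$, we have $i\preceq j$ in $P(\lambda)$ if and only if $i<j$ and $p(i)+p(j-i)=p(j)$.
   Context: $\Delta_\lambda=\mathrm{conv}(e_1,\dots,e_d,\lambda)\subset\mathbb{R}^d$, with fundamental parallelepiped $\Pi_\lambda=\{\sum_{i=1}^d\gamma_i(1,e_i)+\gamma_{d+1}(1,\lambda):0\le\gamma_i<1\}\subset\mathbb{R}^{d+1}$. The poset $P(\lambda)$ is the set $\Pi_\lambda\cap\mathbb{Z}^{d+1}$ ordered by $\sigma\preceq\mu$ iff $\mu-\sigma\in\Pi_\lambda\cap\mathbb{Z}^{d+1}$. For $0\le b<n-1$ set $p(b)=\left(\sum_{t=1}^d\lceil b\lambda_t/(n-1)\rceil-b,\ \lceil b\lambda_1/(n-1)\rceil,\dots,\lceil b\lambda_d/(n-1)\rceil\right)$; the map $b\mapsto p(b)$ is a bijection from $\{0,\dots,n-2\}$ onto $\Pi_\lambda\cap\mathbb{Z}^{d+1}$, and each integer $b$ is identified with $p(b)$, so $P(\lambda)$ is regarded as a partial order $\preceq$ on $\{0,\dots,n-2\}$. *)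

theory Defs
  imports Complex_Main
begin

text \<open>Vectors in R^(d+1) / Z^(d+1) are functions on nat with coordinates 0..d
  (coordinate 0 is the leading "height" coordinate) and zero beyond d.
  lam is indexed by 1..d.\<close>

definition fund_par :: "nat \<Rightarrow> (nat \<Rightarrow> nat) \<Rightarrow> (nat \<Rightarrow> real) set" where
  "fund_par d lam = {x. \<exists>\<gamma>::nat \<Rightarrow> real.
      (\<forall>i\<in>{1..d+1}. 0 \<le> \<gamma> i \<and> \<gamma> i < 1) \<and>
      x 0 = (\<Sum>i=1..d+1. \<gamma> i) \<and>
      (\<forall>t\<in>{1..d}. x t = \<gamma> t + \<gamma> (d+1) * real (lam t)) \<and>
      (\<forall>t>d. x t = 0)}"

definition fund_par_lattice :: "nat \<Rightarrow> (nat \<Rightarrow> nat) \<Rightarrow> (nat \<Rightarrow> int) set" where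
  "fund_par_lattice d lam = {z. (\<forall>t>d. z t = 0) \<and> (\<lambda>t. real_of_int (z t)) \<in> fund_par d lam}"

definition pvec :: "nat \<Rightarrow> (nat \<Rightarrow> nat) \<Rightarrow> nat \<Rightarrow> nat \<Rightarrow> nat \<Rightarrow> int" where
  "pvec d lam n b t =
     (if t = 0 then (\<Sum>s=1..d. \<lceil>real b * real (lam s) / real (n - 1)\<rceil>) - int b
      else if t \<le> d then \<lceil>real b * real (lam t) / real (n - 1)\<rceil>
      else 0)"

definition P_le :: "nat \<Rightarrow> (nat \<Rightarrow> nat) \<Rightarrow> nat \<Rightarrow> nat \<Rightarrow> nat \<Rightarrow> bool" where
  "P_le d lam n i j \<longleftrightarrow> (\<lambda>t. pvec d lam n j t - pvec d lam n i t) \<in> fund_par_lattice d lam"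

end

theory Submission
  imports Defs
begin

text \<open>Every lattice point z of the fundamental parallelepiped is determined by its last
  coefficient g: the height defect (\<Sum>t. z t) - z 0 equals g (n - 1) and hence is an integer
  b \<in> {0..n-2} with g = b/(n-1), while z t = \<lceil>g lam t\<rceil> because the remaining coefficients
  lie in [0,1). So the lattice points are exactly the vectors p(b), and the height defect of
  p(b) is b. Consequently p(j) - p(i) is a lattice point iff it equals p(b) with b = j - i.\<close>

lemma sum_pvec_minus_height:
  "(\<Sum>t=1..d. pvec d lam n b t) - pvec d lam n b 0 = int b"
proof -
  have "(\<Sum>t=1..d. pvec d lam n b t) = (\<Sum>t=1..d. \<lceil>real b * real (lam t) / real (n - 1)\<rceil>)"
    by (rule sum.cong) (auto simp: pvec_def)
  then show ?thesis by (simp add: pvec_def)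
qed

lemma fund_par_height_defect:
  fixes x \<gamma> :: "nat \<Rightarrow> real"
  assumes "x 0 = (\<Sum>i=1..d+1. \<gamma> i)"
    and "\<forall>t\<in>{1..d}. x t = \<gamma> t + \<gamma> (d+1) * real (lam t)"
  shows "(\<Sum>t=1..d. x t) - x 0 = \<gamma> (d+1) * (real (\<Sum>t=1..d. lam t) - 1)"
proof -
  have "(\<Sum>t=1..d. x t) = (\<Sum>t=1..d. \<gamma> t) + \<gamma> (d+1) * real (\<Sum>t=1..d. lam t)"
    using assms(2) by (simp add: sum.distrib sum_distrib_left)
  then show ?thesis using assms(1) by (simp add: algebra_simps)
qed

lemma pvec_in_fund_par_lattice:
  assumes n: "n = (\<Sum>t=1..d. lam t)" and "n \<ge> 2" and "b < n - 1"
  shows "pvec d lam n b \<in> fund_par_lattice d lam"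
proof -
  define N where "N = real (n - 1)"
  have N: "N > 0" "N = real n - 1" using \<open>n \<ge> 2\<close> by (auto simp: N_def)
  define g where "g = real b / N"
  have g: "0 \<le> g" "g < 1" "g * N = real b"
    using \<open>b < n - 1\<close> N by (auto simp: g_def N_def divide_simps)
  define \<gamma> where "\<gamma> i = (if i = d + 1 then g
    else real_of_int \<lceil>g * real (lam i)\<rceil> - g * real (lam i))" for i
  have \<gamma>_range: "\<forall>i\<in>{1..d+1}. 0 \<le> \<gamma> i \<and> \<gamma> i < 1"
    using g by (auto simp: \<gamma>_def) linarith+
  have coord: "\<forall>t\<in>{1..d}. real_of_int (pvec d lam n b t) = \<gamma> t + \<gamma> (d+1) * real (lam t)"
    by (auto simp: pvec_def \<gamma>_def g_def N_def)
  have "(\<Sum>i=1..d. \<gamma> i) = (\<Sum>i=1..d. real_of_int \<lceil>g * real (lam i)\<rceil>) - g * real n"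
    by (simp add: \<gamma>_def n sum_subtractf sum_distrib_left)
  moreover have "g * real n = g + real b" using g(3) N(2) by (simp add: algebra_simps)
  ultimately have height: "real_of_int (pvec d lam n b 0) = (\<Sum>i=1..d+1. \<gamma> i)"
    by (simp add: pvec_def \<gamma>_def g_def N_def)
  show ?thesis
    unfolding fund_par_lattice_def fund_par_def
    using \<gamma>_range coord height by (auto simp: pvec_def)
qed

lemma fund_par_lattice_point_is_pvec:
  assumes n: "n = (\<Sum>t=1..d. lam t)" and "n \<ge> 2"
    and "z \<in> fund_par_lattice d lam"
  obtains b where "b < n - 1" and "z = pvec d lam n b"
proof -
  define N where "N = real (n - 1)"
  have N: "N > 0" using \<open>n \<ge> 2\<close> by (simp add: N_def)
  from assms(3) obtain \<gamma> :: "nat \<Rightarrow> real" where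
    z_zero: "\<forall>t>d. z t = 0" and
    \<gamma>_range: "\<forall>i\<in>{1..d+1}. 0 \<le> \<gamma> i \<and> \<gamma> i < 1" and
    height: "real_of_int (z 0) = (\<Sum>i=1..d+1. \<gamma> i)" and
    coord: "\<forall>t\<in>{1..d}. real_of_int (z t) = \<gamma> t + \<gamma> (d+1) * real (lam t)"
    unfolding fund_par_lattice_def fund_par_def by auto
  define g where "g = \<gamma> (d+1)"
  have g: "0 \<le> g" "g < 1" using \<gamma>_range by (auto simp: g_def)
  define B where "B = (\<Sum>t=1..d. z t) - z 0"
  have B: "real_of_int B = g * N"
    using fund_par_height_defect[of "\<lambda>t. real_of_int (z t)" \<gamma> d lam] height coord \<open>n \<ge> 2\<close>
    by (simp add: B_def g_def N_def n of_nat_diff)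
  have "0 \<le> g * N" "g * N < N" using g N by simp_all
  then have B_range: "0 \<le> B" "B < int (n - 1)"
    using B unfolding N_def by linarith+
  define b where "b = nat B"
  have b: "int b = B" "b < n - 1" using B_range by (auto simp: b_def)
  have g_eq: "g = real b / N" using B b(1) N by (simp add: field_simps)
  have z_coord: "z t = \<lceil>real b * real (lam t) / real (n - 1)\<rceil>" if "t \<in> {1..d}" for t
  proof -
    have "real_of_int (z t) - 1 < g * real (lam t)" "g * real (lam t) \<le> real_of_int (z t)"
      using coord \<gamma>_range that by (auto simp: g_def)
    then have "\<lceil>g * real (lam t)\<rceil> = z t" by (simp add: ceiling_eq_iff)
    then show ?thesis by (simp add: g_eq N_def)
  qed
  have "z = pvec d lam n b"
  proof
    fix t
    show "z t = pvec d lam n b t"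
    proof (cases "t = 0")
      case True
      have "(\<Sum>t=1..d. z t) = (\<Sum>t=1..d. \<lceil>real b * real (lam t) / real (n - 1)\<rceil>)"
        using z_coord by (rule sum.cong[OF refl])
      then show ?thesis using True B_def b(1) by (simp add: pvec_def)
    qed (use z_coord z_zero in \<open>auto simp: pvec_def\<close>)
  qed
  with b(2) show thesis by (rule that)
qed

lemma fund_par_lattice_eq_pvec_image:
  assumes "n = (\<Sum>t=1..d. lam t)" and "n \<ge> 2"
  shows "fund_par_lattice d lam = pvec d lam n ` {..<n - 1}"
  using pvec_in_fund_par_lattice[OF assms] fund_par_lattice_point_is_pvec[OF assms]
  by (metis (no_types, lifting) image_iff lessThan_iff subsetI subset_antisym)

lemma pvec_diff_index:
  assumes "(\<lambda>t. pvec d lam n j t - pvec d lam n i t) = pvec d lam n b"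
  shows "int b = int j - int i"
proof -
  have "int b = (\<Sum>t=1..d. pvec d lam n j t - pvec d lam n i t)
      - (pvec d lam n j 0 - pvec d lam n i 0)"
    using sum_pvec_minus_height[of d lam n b] unfolding assms[symmetric] by simp
  then show ?thesis
    using sum_pvec_minus_height[of d lam n j] sum_pvec_minus_height[of d lam n i]
    by (simp add: sum_subtractf)
qed

lemma pvec_diff_in_pvec_image_iff:
  assumes "j < n - 1" and "i \<noteq> j"
  shows "(\<exists>b<n - 1. (\<lambda>t. pvec d lam n j t - pvec d lam n i t) = pvec d lam n b) \<longleftrightarrow>
    i < j \<and> (\<lambda>t. pvec d lam n j t - pvec d lam n i t) = pvec d lam n (j - i)"
proof
  assume "\<exists>b<n - 1. (\<lambda>t. pvec d lam n j t - pvec d lam n i t) = pvec d lam n b"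
  then obtain b where "(\<lambda>t. pvec d lam n j t - pvec d lam n i t) = pvec d lam n b" by blast
  moreover from pvec_diff_index[OF this] \<open>i \<noteq> j\<close> have "i < j" "b = j - i" by auto
  ultimately show "i < j \<and> (\<lambda>t. pvec d lam n j t - pvec d lam n i t) = pvec d lam n (j - i)"
    by simp
next
  assume "i < j \<and> (\<lambda>t. pvec d lam n j t - pvec d lam n i t) = pvec d lam n (j - i)"
  moreover have "j - i < n - 1" using \<open>j < n - 1\<close> by linarith
  ultimately show "\<exists>b<n - 1. (\<lambda>t. pvec d lam n j t - pvec d lam n i t) = pvec d lam n b"
    by blast
qed

theorem lemma2p13:
  fixes d n :: nat and lam :: "nat \<Rightarrow> nat" and i j :: nat
  assumes "d \<ge> 1"
    and "\<forall>t\<in>{1..d}. lam t > 0"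
    and "n = (\<Sum>t=1..d. lam t)"
    and "n \<ge> 2"
    and "i < n - 1" and "j < n - 1" and "i \<noteq> j"
  shows "P_le d lam n i j \<longleftrightarrow>
           (i < j \<and> (\<lambda>t. pvec d lam n i t + pvec d lam n (j - i) t) = pvec d lam n j)"
proof -
  have diff_eq_iff: "(\<lambda>t. pvec d lam n j t - pvec d lam n i t) = pvec d lam n b \<longleftrightarrow>
      (\<lambda>t. pvec d lam n i t + pvec d lam n b t) = pvec d lam n j" for b
    by (auto simp: fun_eq_iff algebra_simps)
  have "P_le d lam n i j \<longleftrightarrow>
      (\<exists>b<n - 1. (\<lambda>t. pvec d lam n j t - pvec d lam n i t) = pvec d lam n b)"
    unfolding P_le_def fund_par_lattice_eq_pvec_image[OF assms(3,4)] by (auto simp: eq_commute)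
  also have "\<dots> \<longleftrightarrow> i < j \<and> (\<lambda>t. pvec d lam n j t - pvec d lam n i t) = pvec d lam n (j - i)"
    using assms(6,7) by (rule pvec_diff_in_pvec_image_iff)
  finally show ?thesis by (simp only: diff_eq_iff)
qed

end
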